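(* Let $A$ be a real constant and let $g(x)=\dfrac{Ae^{x/2}+e^{-x/2}}{Ae^{x/2}-e^{-x/2}}$ on an open interval where the denominator does not vanish (for $A=1$, $g=\coth(x/2)$; for $A=-1$, $g=\tanh(x/2)$). Then for every integer $i\ge2$, $$\frac i2\,g\,g^{(i-1)}+\sum_{k=0}^{\lfloor (i-1)/2\rfloor}\binom{i}{2k}B_{2k}\,g^{(i-2k)}=0,$$ where $g^{(j)}$ denotes the $j$-th derivative of $g$.
   Context: Bernoulli numbers are defined by $\frac{z}{e^z-1}=\sum_{m\ge0}\frac{B_m}{m!}z^m$ (so $B_0=1$, $B_2=1/6$). *)

theory Defs
  imports "HOL-Analysis.Analysis" "HOL-Computational_Algebra.Formal_Power_Series"
begin

text \<open>Bernoulli numbers via the generating function z/(e^z - 1) = sum B_m z^m / m!,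
  taken as a formal power series (fps division handles the factor z).\<close>
definition bernoulli_num :: "nat \<Rightarrow> real" where
  "bernoulli_num m = fact m * fps_nth (fps_X / (fps_exp 1 - 1)) m"

definition gA :: "real \<Rightarrow> real \<Rightarrow> real" where
  "gA A x = (A * exp (x/2) + exp (-x/2)) / (A * exp (x/2) - exp (-x/2))"

end

theory Submission
  imports Defs "HOL-Computational_Algebra.Polynomial"
begin

(* Since g' = (1 - g^2)/2, every derivative of g is a polynomial in g, and the Leibniz rule
   gives g^(n+1) = -1/2 * sum_k (n choose k) g^(k) g^(n-k) for n >= 1.  Hence the exponential
   generating function G(t) of the values g^(n)(x) solves the Riccati equation G' = (1 - G^2)/2
   with G(0) = u = g(x), so G = ((1+u) e^t + u - 1) / ((1+u) e^t + 1 - u).  Multiplying by the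
   even series (t/2) coth(t/2) = t/(e^t - 1) + t/2 = sum_{m ~= 1} B_m t^m / m! turns this into
   (t/2) coth(t/2) (G - u) = (t/2) (1 - u G), and comparing the coefficients of t^i gives the
   identity. *)

no_notation vec_nth (infixl \<open>$\<close> 90)
notation fps_nth (infixl \<open>$\<close> 75)

lemma sum_Suc_choose_split:
  fixes f :: "nat \<Rightarrow> nat \<Rightarrow> 'a::comm_semiring_1"
  shows "(\<Sum>i\<le>Suc n. of_nat (Suc n choose i) * f i (Suc n - i)) =
    (\<Sum>i\<le>n. of_nat (n choose i) * f (Suc i) (n - i)) + (\<Sum>i\<le>n. of_nat (n choose i) * f i (Suc n - i))"
proof -
  have "(\<Sum>i\<le>n. of_nat (n choose i) * f i (Suc n - i))
      = (\<Sum>i\<le>Suc n. of_nat (n choose i) * f i (Suc n - i))"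
    by (simp add: binomial_eq_0)
  also have "\<dots> = f 0 (Suc n) + (\<Sum>i\<le>n. of_nat (n choose Suc i) * f (Suc i) (n - i))"
    by (subst sum.atMost_Suc_shift) simp
  finally show ?thesis
    by (subst sum.atMost_Suc_shift) (simp add: sum.distrib distrib_right add_ac)
qed

lemma sum_lessThan_Suc_eq_sum_even:
  fixes f :: "nat \<Rightarrow> 'a::comm_monoid_add"
  assumes "\<And>j. odd j \<Longrightarrow> f j = 0"
  shows "(\<Sum>j<Suc m. f j) = (\<Sum>k\<le>m div 2. f (2 * k))"
proof (induction m)
  case (Suc m)
  show ?case
  proof (cases "even (Suc m)")
    case True
    then have "Suc m div 2 = Suc (m div 2)" and "2 * Suc (m div 2) = Suc m"
      by presburger+
    then show ?thesis using Suc.IH by simp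
  next
    case False
    then have "Suc m div 2 = m div 2"
      by presburger
    then show ?thesis using Suc.IH assms[OF False] by simp
  qed
qed simp

(* If g' = q(g), then (p(g))' = (pderiv_along q p)(g). *)
definition pderiv_along ::
    "'a::{comm_semiring_1,semiring_no_zero_divisors} poly \<Rightarrow> 'a poly \<Rightarrow> 'a poly" where
  "pderiv_along q p = pderiv p * q"

lemma pderiv_along_add: "pderiv_along q (p + r) = pderiv_along q p + pderiv_along q r"
  by (simp add: pderiv_along_def pderiv_add distrib_right)

lemma pderiv_along_smult: "pderiv_along q (smult c p) = smult c (pderiv_along q p)"
  by (simp add: pderiv_along_def pderiv_smult)

lemma pderiv_along_mult: "pderiv_along q (p * r) = pderiv_along q p * r + p * pderiv_along q r"
  by (simp add: pderiv_along_def pderiv_mult algebra_simps)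

lemma pderiv_along_0 [simp]: "pderiv_along q 0 = 0"
  by (simp add: pderiv_along_def)

lemma pderiv_along_const [simp]: "pderiv_along q [:c:] = 0"
  by (simp add: pderiv_along_def)

lemma pderiv_along_of_nat [simp]: "pderiv_along q (of_nat k) = 0"
  by (simp add: pderiv_along_def)

lemma pderiv_along_sum: "pderiv_along q (sum f A) = (\<Sum>x\<in>A. pderiv_along q (f x))"
  by (induction A rule: infinite_finite_induct) (simp_all add: pderiv_along_add)

lemma higher_pderiv_along_add:
  "(pderiv_along q ^^ n) (p + r) = (pderiv_along q ^^ n) p + (pderiv_along q ^^ n) r"
  by (induction n) (simp_all add: pderiv_along_add)

lemma higher_pderiv_along_smult:
  "(pderiv_along q ^^ n) (smult c p) = smult c ((pderiv_along q ^^ n) p)"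
  by (induction n) (simp_all add: pderiv_along_smult)

lemma higher_pderiv_along_const: "(pderiv_along q ^^ Suc n) [:c:] = 0"
  by (induction n) simp_all

lemma higher_pderiv_along_mult:
  "(pderiv_along q ^^ n) (p * r) =
     (\<Sum>i\<le>n. of_nat (n choose i) * (pderiv_along q ^^ i) p * (pderiv_along q ^^ (n - i)) r)"
proof (induction n)
  case (Suc n)
  let ?D = "pderiv_along q"
  have "(?D ^^ Suc n) (p * r) =
      (\<Sum>i\<le>n. of_nat (n choose i) * (?D ^^ Suc i) p * (?D ^^ (n - i)) r)
    + (\<Sum>i\<le>n. of_nat (n choose i) * (?D ^^ i) p * (?D ^^ Suc (n - i)) r)"
    by (simp add: Suc.IH pderiv_along_sum pderiv_along_mult algebra_simps sum.distrib)
  also have "\<dots> = (\<Sum>i\<le>Suc n. of_nat (Suc n choose i) * (?D ^^ i) p * (?D ^^ (Suc n - i)) r)"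
    using sum_Suc_choose_split[of n "\<lambda>i j. (?D ^^ i) p * (?D ^^ j) r"]
    by (simp add: Suc_diff_le mult.assoc)
  finally show ?case .
qed simp

lemma pderiv_along_X [simp]: "pderiv_along q [:0, 1:] = q"
  by (simp add: pderiv_along_def pderiv_pCons)

lemma higher_pderiv_along_quadratic_X:
  fixes a b :: "'a::idom"
  assumes "n \<ge> 1"
  shows "(pderiv_along [:a, 0, b:] ^^ Suc n) [:0, 1:] =
    smult b (\<Sum>i\<le>n. of_nat (n choose i) * (pderiv_along [:a, 0, b:] ^^ i) [:0, 1:]
                        * (pderiv_along [:a, 0, b:] ^^ (n - i)) [:0, 1:])"
proof -
  obtain m where n: "n = Suc m" using assms by (cases n) auto
  have q: "[:a, 0, b:] = [:a:] + smult b ([:0, 1:] * [:0, 1:])"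
    by simp
  have "(pderiv_along [:a, 0, b:] ^^ Suc n) [:0, 1:] = (pderiv_along [:a, 0, b:] ^^ n) [:a, 0, b:]"
    by (simp only: funpow_Suc_right o_apply pderiv_along_X)
  also have "\<dots> = smult b ((pderiv_along [:a, 0, b:] ^^ n) ([:0, 1:] * [:0, 1:]))"
    by (subst q) (simp only: n higher_pderiv_along_add higher_pderiv_along_smult
                              higher_pderiv_along_const add_0)
  finally show ?thesis
    by (simp only: higher_pderiv_along_mult)
qed

lemma higher_deriv_eq_poly_of_ode:
  fixes g :: "real \<Rightarrow> real"
  assumes "open S" "\<And>y. y \<in> S \<Longrightarrow> (g has_real_derivative poly q (g y)) (at y)" "y \<in> S"
  shows "(deriv ^^ n) g y = poly ((pderiv_along q ^^ n) [:0, 1:]) (g y)"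
  using assms(3)
proof (induction n arbitrary: y)
  case (Suc n)
  let ?P = "(pderiv_along q ^^ n) [:0, 1:]"
  have "\<forall>\<^sub>F w in nhds y. (deriv ^^ n) g w = poly ?P (g w)"
    using eventually_nhds_in_open[OF \<open>open S\<close> Suc.prems] by (rule eventually_mono) (rule Suc.IH)
  moreover have "((\<lambda>w. poly ?P (g w)) has_real_derivative poly (pderiv_along q ?P) (g y)) (at y)"
    using DERIV_chain2[OF poly_DERIV assms(2)[OF Suc.prems]] by (simp add: pderiv_along_def)
  ultimately show ?case
    by (simp add: deriv_cong_ev[OF _ refl] DERIV_imp_deriv)
qed simp

definition half_coth_fps :: "'a::field_char_0 fps" where
  "half_coth_fps = fps_X / (fps_exp 1 - 1) + fps_const (1/2) * fps_X"

lemma fps_exp_1_minus_1_neq_0: "fps_exp 1 - 1 \<noteq> (0 :: 'a::field_char_0 fps)"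
proof
  assume "fps_exp 1 - 1 = (0 :: 'a fps)"
  then have "(fps_exp 1 - 1 :: 'a fps) $ 1 = 0" by simp
  then show False by simp
qed

lemma half_coth_fps_times:
  "half_coth_fps * (fps_exp 1 - 1)
     = fps_const (1/2) * fps_X * (fps_exp 1 + 1 :: 'a::field_char_0 fps)"
proof -
  have "subdegree (fps_exp 1 - 1 :: 'a fps) = 1"
    by (rule subdegreeI) auto
  then have "fps_X / (fps_exp 1 - 1) * (fps_exp 1 - 1) = (fps_X :: 'a fps)"
    using fps_exp_1_minus_1_neq_0 by (intro fps_times_divide_eq) auto
  then have "half_coth_fps * (fps_exp 1 - 1)
      = fps_X + fps_const (1/2) * fps_X * (fps_exp 1 - 1 :: 'a fps)"
    by (simp add: half_coth_fps_def distrib_right)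
  moreover have "fps_const (1/2) * 2 = (1 :: 'a fps)"
    by (simp add: fps_numeral_fps_const del: fps_const_mult)
  ultimately show ?thesis
    by algebra
qed

lemma half_coth_fps_compose_uminus_X:
  "half_coth_fps oo (- fps_X) = (half_coth_fps :: 'a::field_char_0 fps)"
proof -
  let ?H = "half_coth_fps :: 'a fps" and ?c = "fps_const (1/2) :: 'a fps"
  have "(?H * (fps_exp 1 - 1)) oo (- fps_X) = (?c * fps_X * (fps_exp 1 + 1)) oo (- fps_X)"
    by (simp only: half_coth_fps_times)
  then have "(?H oo - fps_X) * (fps_exp (-1) - 1) = ?c * (- fps_X) * (fps_exp (-1) + 1)"
    by (simp add: fps_compose_mult_distrib fps_compose_add_distrib fps_compose_sub_distrib)
  then have "(?H oo - fps_X) * (fps_exp (-1) - 1) * fps_exp 1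
      = ?c * (- fps_X) * (fps_exp (-1) + 1) * fps_exp 1"
    by simp
  moreover have "fps_exp (-1) * fps_exp 1 = (1 :: 'a fps)"
    by (simp flip: fps_exp_add_mult)
  ultimately have "(?H oo - fps_X) * (fps_exp 1 - 1) = ?c * fps_X * (fps_exp 1 + 1)"
    by algebra
  then have "(?H oo - fps_X) * (fps_exp 1 - 1) = ?H * (fps_exp 1 - 1)"
    by (simp only: half_coth_fps_times)
  then show ?thesis
    using fps_exp_1_minus_1_neq_0 by simp
qed

lemma half_coth_fps_nth_odd:
  assumes "odd n"
  shows "half_coth_fps $ n = (0 :: 'a::field_char_0)"
proof -
  have "(half_coth_fps oo (- fps_X)) $ n = - (half_coth_fps $ n :: 'a)"
    using assms by (simp add: fps_compose_uminus')
  then show ?thesis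
    by (simp add: half_coth_fps_compose_uminus_X)
qed

lemma bernoulli_num_conv_half_coth_fps:
  "m \<noteq> 1 \<Longrightarrow> bernoulli_num m = fact m * half_coth_fps $ m"
  by (simp add: bernoulli_num_def half_coth_fps_def)

lemma fps_deriv_eq_mult_imp_eq_0:
  fixes H K :: "'a::{idom, semiring_char_0} fps"
  assumes "fps_deriv H = K * H" and "H $ 0 = 0"
  shows "H = 0"
proof (rule fps_ext)
  fix n
  show "H $ n = 0 $ n"
  proof (induction n rule: less_induct)
    case (less n)
    show ?case
    proof (cases n)
      case (Suc m)
      have "of_nat (Suc m) * H $ Suc m = (K * H) $ m"
        using fps_deriv_nth[of H m] by (simp add: assms(1))
      also have "\<dots> = 0"
        using less Suc by (simp add: fps_mult_nth)
      finally show ?thesis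
        using Suc by (simp del: of_nat_Suc)
    qed (simp add: assms(2))
  qed
qed

lemma fps_riccati_closed_form:
  fixes G :: "'a::field_char_0 fps"
  assumes "fps_deriv G = fps_const (1/2) * (1 - G ^ 2)" and "G $ 0 = u"
  shows "G * ((1 + fps_const u) * fps_exp 1 + (1 - fps_const u))
       = (1 + fps_const u) * fps_exp 1 + (fps_const u - 1)"
proof -
  define c U where "c = fps_const (1/2 :: 'a)" and "U = fps_const u"
  define H where "H = G * ((1 + U) * fps_exp 1 + (1 - U)) - ((1 + U) * fps_exp 1 + (U - 1))"
  have c2: "c * 2 = 1"
    by (simp add: c_def fps_numeral_fps_const del: fps_const_mult)
  have U_deriv: "fps_deriv U = 0"
    by (simp add: U_def)
  have "fps_deriv H = c * (1 - G ^ 2) * ((1 + U) * fps_exp 1 + (1 - U))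
      + G * ((1 + U) * fps_exp 1) - (1 + U) * fps_exp 1"
    by (simp add: H_def assms(1)[folded c_def] U_deriv)
  also have "\<dots> = (c * (1 - G)) * H"
    unfolding H_def using c2 by algebra
  finally have "H = 0"
    by (rule fps_deriv_eq_mult_imp_eq_0) (simp add: H_def U_def assms(2))
  then show ?thesis
    by (simp add: H_def U_def)
qed

lemma half_coth_fps_mult_riccati:
  fixes G :: "'a::field_char_0 fps"
  assumes "fps_deriv G = fps_const (1/2) * (1 - G ^ 2)" and "G $ 0 = u"
  shows "half_coth_fps * (G - fps_const u) = fps_const (1/2) * fps_X * (1 - fps_const u * G)"
proof -
  define c U E where "c = fps_const (1/2 :: 'a)" and "U = fps_const u" and "E = fps_exp (1 :: 'a)"
  have closed_form: "G * ((1 + U) * E + (1 - U)) = (1 + U) * E + (U - 1)"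
    unfolding U_def E_def by (rule fps_riccati_closed_form[OF assms])
  then have swap: "(E + 1) * (G - U) = (1 - U * G) * (E - 1)"
    by algebra
  have "half_coth_fps * (G - U) * (E - 1) = (half_coth_fps * (E - 1)) * (G - U)"
    by (simp only: ac_simps)
  also have "\<dots> = c * fps_X * ((E + 1) * (G - U))"
    by (simp only: c_def E_def half_coth_fps_times mult.assoc)
  also have "\<dots> = c * fps_X * ((1 - U * G) * (E - 1))"
    by (simp only: swap)
  finally show ?thesis
    using fps_exp_1_minus_1_neq_0 unfolding c_def U_def E_def by (simp add: mult.assoc)
qed

lemma fps_deriv_egf_riccati:
  fixes c :: "nat \<Rightarrow> 'a::field_char_0"
  assumes "c 1 = (1 - c 0 ^ 2) / 2"
    and "\<And>n. n \<ge> 1 \<Longrightarrow> c (Suc n) = - (1/2) * (\<Sum>i\<le>n. of_nat (n choose i) * c i * c (n - i))"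
  shows "fps_deriv (Abs_fps (\<lambda>n. c n / fact n))
       = fps_const (1/2) * (1 - Abs_fps (\<lambda>n. c n / fact n) ^ 2)"
proof (rule fps_ext)
  fix n
  let ?G = "Abs_fps (\<lambda>n. c n / fact n)"
  have "fps_deriv ?G $ n = c (Suc n) / fact n"
    by (simp add: fact_Suc del: of_nat_Suc)
  also have "\<dots> = 1/2 * (1 - ?G ^ 2) $ n"
  proof (cases "n = 0")
    case True
    then show ?thesis using assms(1) by (simp add: fps_mult_nth power2_eq_square)
  next
    case False
    have "(\<Sum>i\<le>n. of_nat (n choose i) * c i * c (n - i))
        = fact n * (\<Sum>i\<le>n. c i / fact i * (c (n - i) / fact (n - i)))"
      by (auto simp: sum_distrib_left binomial_fact intro!: sum.cong)
    then show ?thesis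
      using False assms(2)[of n] by (simp add: fps_mult_nth power2_eq_square atLeast0AtMost)
  qed
  finally show "fps_deriv ?G $ n = (fps_const (1/2) * (1 - ?G ^ 2)) $ n"
    by (simp only: fps_mult_left_const_nth)
qed

lemma bernoulli_identity_of_riccati_sequence:
  fixes c :: "nat \<Rightarrow> real"
  assumes c1: "c 1 = (1 - c 0 ^ 2) / 2"
    and rec: "\<And>n. n \<ge> 1 \<Longrightarrow> c (Suc n) = - (1/2) * (\<Sum>i\<le>n. of_nat (n choose i) * c i * c (n - i))"
    and i: "i \<ge> 2"
  shows "real i / 2 * c 0 * c (i - 1)
       + (\<Sum>k=0..(i - 1) div 2. real (i choose (2*k)) * bernoulli_num (2*k) * c (i - 2*k)) = 0"
proof -
  define G where "G = Abs_fps (\<lambda>n. c n / fact n)"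
  define H where "H = (half_coth_fps :: real fps)"
  define f where "f j = real (i choose j) * (fact j * H $ j) * c (i - j)" for j
  have "H * (G - fps_const (c 0)) = fps_const (1/2) * fps_X * (1 - fps_const (c 0) * G)"
    unfolding H_def G_def
    by (rule half_coth_fps_mult_riccati[OF fps_deriv_egf_riccati[OF c1 rec]]) simp_all
  then have "(H * (G - fps_const (c 0))) $ i
      = (fps_const (1/2) * fps_X * (1 - fps_const (c 0) * G)) $ i"
    by (rule arg_cong)
  then have "(H * G) $ i - H $ i * c 0 = - (c 0 * c (i - 1) / fact (i - 1)) / 2"
    using i by (simp add: right_diff_distrib mult.assoc G_def)
  then have "(\<Sum>j<i. H $ j * (c (i - j) / fact (i - j))) = - (c 0 * c (i - 1) / fact (i - 1)) / 2"
    by (simp add: G_def fps_mult_nth atLeast0AtMost lessThan_Suc_atMost[symmetric])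
  then have "fact i * (\<Sum>j<i. H $ j * (c (i - j) / fact (i - j))) = - (real i / 2 * c 0 * c (i - 1))"
    using i fact_reduce[of i, where 'a = real] by (simp add: field_simps)
  moreover have "fact i * (\<Sum>j<i. H $ j * (c (i - j) / fact (i - j))) = (\<Sum>j<i. f j)"
    unfolding sum_distrib_left f_def by (intro sum.cong) (simp_all add: binomial_fact field_simps)
  moreover have "(\<Sum>j<i. f j) = (\<Sum>k\<le>(i - 1) div 2. f (2 * k))"
    using sum_lessThan_Suc_eq_sum_even[of f "i - 1"] i
    by (simp add: f_def H_def half_coth_fps_nth_odd)
  moreover have "f (2 * k) = real (i choose (2*k)) * bernoulli_num (2*k) * c (i - 2*k)" for k
    by (simp add: f_def H_def bernoulli_num_conv_half_coth_fps)
  ultimately show ?thesis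
    by (simp add: atLeast0AtMost)
qed

lemma gA_has_real_derivative:
  assumes "A * exp (y/2) - exp (-y/2) \<noteq> 0"
  shows "(gA A has_real_derivative (1 - gA A y ^ 2) / 2) (at y)"
proof -
  let ?N = "A * exp (y/2) + exp (-y/2)" and ?D = "A * exp (y/2) - exp (-y/2)"
  have deriv: "(gA A has_real_derivative (?D / 2 * ?D - ?N * (?N / 2)) / ?D ^ 2) (at y)"
    unfolding gA_def[abs_def] using assms
    by (auto intro!: derivative_eq_intros simp: power2_eq_square) (simp add: field_simps)
  have simplify: "(D / 2 * D - N * (N / 2)) / D ^ 2 = (1 - (N / D) ^ 2) / 2"
    if "D \<noteq> 0" for N D :: real
    using that by (simp add: field_simps power2_eq_square)
  from deriv show ?thesis
    by (simp only: gA_def simplify[OF assms])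
qed

theorem mainTheorem9:
  fixes A a b x :: real and i :: nat
  assumes "\<forall>y\<in>{a<..<b}. A * exp (y/2) - exp (-y/2) \<noteq> 0"
    and "x \<in> {a<..<b}"
    and "i \<ge> 2"
  shows "real i / 2 * gA A x * (deriv ^^ (i - 1)) (gA A) x
         + (\<Sum>k=0..(i - 1) div 2. real (i choose (2*k)) * bernoulli_num (2*k)
              * (deriv ^^ (i - 2*k)) (gA A) x) = 0"
proof -
  define q where "q = [:1/2, 0, -1/2 :: real:]"
  define c where "c n = poly ((pderiv_along q ^^ n) [:0, 1:]) (gA A x)" for n
  have "(gA A has_real_derivative poly q (gA A y)) (at y)" if "y \<in> {a<..<b}" for y
    using gA_has_real_derivative[of A y] assms(1) that
    by (simp add: q_def power2_eq_square diff_divide_distrib)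
  then have derivs: "(deriv ^^ n) (gA A) x = c n" for n
    unfolding c_def by (rule higher_deriv_eq_poly_of_ode[OF open_greaterThanLessThan _ assms(2)])
  have "c 1 = (1 - c 0 ^ 2) / 2"
    by (simp add: c_def q_def power2_eq_square)
  moreover have "c (Suc n) = - (1/2) * (\<Sum>i\<le>n. of_nat (n choose i) * c i * c (n - i))"
    if "n \<ge> 1" for n
    unfolding c_def q_def higher_pderiv_along_quadratic_X[OF that] by (simp add: poly_sum)
  ultimately show ?thesis
    using bernoulli_identity_of_riccati_sequence[of c i] assms(3) by (simp add: derivs c_def)
qed

end
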